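(* Let $\mathcal{M}=(S,A,X,\delta,T,\rho)$ be a wpMDP whose target states are $T=\{t_0,\dots,t_n\}$ with $n\ge 1$ and $0=\rho(t_0)<\rho(t_1)<\dots<\rho(t_n)$, and let $\mathcal{G}(\mathcal{M})=(V,E)$. Let $\mathcal{N}$ be the pMDP obtained from $\mathcal{M}$ as follows: add two fresh states $\mathit{fin}$ and $\mathit{fail}$ (which become the only target states of $\mathcal{N}$, with weights $1$ and $0$), add a fresh action $a\notin A$, keep all transitions of $\mathcal{M}$, and for every $t\in T$ (which is no longer a target in $\mathcal{N}$) set $\delta'(t,a,\mathit{fin})=\rho(t)/\rho(t_n)$ and $\delta'(t,a,\mathit{fail})=1-\rho(t)/\rho(t_n)$ (all other new transitions being $0$). Then for every $v\in V$ and every $W\subseteq V$: $v\trianglelefteq W$ holds in $\mathcal{M}$ if and only if $v\trianglelefteq W$ holds in $\mathcal{N}$.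
   Context: A weighted parametric MDP (wpMDP) is a tuple $\mathcal{M}=(S,A,X,\delta,T,\rho)$ with finite sets $S$ of states, $A$ of actions, $X$ of parameters, a set $T\subseteq S$ of target states, a transition function $\delta:(S\setminus T)\times A\times S\to\mathbb{Q}[X]$ (polynomials with rational coefficients) and a weight function $\rho:T\to\mathbb{Q}$. Target states have no outgoing transitions. Its graph $\mathcal{G}(\mathcal{M})=(V,E)$ has vertex set $V=S\cup S_N$ where $S_N=(S\setminus T)\times A$ (state-action pairs), an edge $(s,(s,a))$ whenever $\delta(s,a,s')\not\equiv 0$ (not syntactically zero) for some $s'\in S$ other than the designated zero-weight target $\mathit{fail}$, and an edge $((s,a),s')$ whenever $\delta(s,a,s')\not\equiv 0$; $vE$ denotes the set of successors of $v$. A valuation $\mathsf{val}:X\to\mathbb{R}$ is graph-preserving if for all $s\in S\setminus T$, $a\in A$, $s'\in S$: $\delta(s,a,s')[\mathsf{val}]\ge 0$, $\sum_{s''\in S}\delta(s,a,s'')[\mathsf{val}]=1$, and $\delta(s,a,s')\not\equiv0$ implies $\delta(s,a,s')[\mathsf{val}]\neq 0$. A strategy is a map $\sigma:S\setminus T\to A$; together with $\mathsf{val}$ it induces a Markov chain moving from $s$ to $s'$ with probability $\delta(s,\sigma(s),s')[\mathsf{val}]$. For a state $s$, $\mathrm{Rew}^\sigma_{\mathsf{val}}(s)=\sum_{t\in T}\rho(t)\,\mathbb{P}^s[\Diamond t]$, where $\mathbb{P}^s[\Diamond t]$ is the probability of reaching $t$ from $s$ in that chain; for $(s,a)\in S_N$,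 $\mathrm{Rew}^\sigma_{\mathsf{val}}((s,a))=\sum_{s'\in (s,a)E}\delta(s,a,s')[\mathsf{val}]\cdot\mathrm{Rew}^\sigma_{\mathsf{val}}(s')$. Let $\mathrm{Rew}^*_{\mathsf{val}}(v)=\max_\sigma \mathrm{Rew}^\sigma_{\mathsf{val}}(v)$. A pMDP is a wpMDP with $T=\{\mathit{fin},\mathit{fail}\}$, $\rho(\mathit{fin})=1$, $\rho(\mathit{fail})=0$. Never-worse relation: for $v\in V$ and $W\subseteq V$, $v\trianglelefteq W$ iff for every graph-preserving valuation $\mathsf{val}$ there exists $w\in W$ with $\mathrm{Rew}^*_{\mathsf{val}}(v)\le \mathrm{Rew}^*_{\mathsf{val}}(w)$ (values computed in the respective model). *)

theory Defs
  imports Complex_Main "HOL-Library.Poly_Mapping"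
begin

text \<open>A polynomial in the parameters of type 'x is a finitely supported map from
monomials (finitely supported exponent vectors) to rational coefficients.
Syntactic zero is the zero polynomial.\<close>

type_synonym 'x mpoly = "('x \<Rightarrow>\<^sub>0 nat) \<Rightarrow>\<^sub>0 rat"

definition peval :: "'x mpoly \<Rightarrow> ('x \<Rightarrow> real) \<Rightarrow> real" where
  "peval p val = (\<Sum>mon\<in>Poly_Mapping.keys p. of_rat (Poly_Mapping.lookup p mon) * (\<Prod>y\<in>Poly_Mapping.keys mon. val y ^ Poly_Mapping.lookup mon y))"

definition pconst :: "rat \<Rightarrow> 'x mpoly" where
  "pconst c = Poly_Mapping.single 0 c"

record ('s, 'a, 'x) wpmdp =
  states  :: "'s set"
  actions :: "'a set"
  trans   :: "'s \<Rightarrow> 'a \<Rightarrow> 's \<Rightarrow> 'x mpoly"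
  targets :: "'s set"
  weight  :: "'s \<Rightarrow> rat"

definition enabled :: "('s, 'a, 'x) wpmdp \<Rightarrow> 's \<Rightarrow> 'a \<Rightarrow> bool" where
  "enabled M s a \<longleftrightarrow> (\<exists>s'\<in>states M. trans M s a s' \<noteq> 0)"

definition wf_wpmdp :: "('s, 'a, 'x) wpmdp \<Rightarrow> bool" where
  "wf_wpmdp M \<longleftrightarrow> finite (states M) \<and> finite (actions M) \<and> targets M \<subseteq> states M \<and>
     (\<forall>s a s'. trans M s a s' \<noteq> 0 \<longrightarrow>
        s \<in> states M - targets M \<and> a \<in> actions M \<and> s' \<in> states M) \<and>
     (\<forall>s\<in>states M - targets M. \<exists>a\<in>actions M. enabled M s a)"

definition graph_preserving :: "('s, 'a, 'x) wpmdp \<Rightarrow> ('x \<Rightarrow> real) \<Rightarrow> bool" where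
  "graph_preserving M val \<longleftrightarrow>
     (\<forall>s\<in>states M - targets M. \<forall>a\<in>actions M.
        (\<forall>s'\<in>states M. peval (trans M s a s') val \<ge> 0 \<and>
            (trans M s a s' \<noteq> 0 \<longrightarrow> peval (trans M s a s') val \<noteq> 0)) \<and>
        (enabled M s a \<longrightarrow> (\<Sum>s'\<in>states M. peval (trans M s a s') val) = 1))"

definition strategies :: "('s, 'a, 'x) wpmdp \<Rightarrow> ('s \<Rightarrow> 'a) set" where
  "strategies M = {\<sigma>. \<forall>s\<in>states M - targets M. \<sigma> s \<in> actions M \<and> enabled M s (\<sigma> s)}"

fun reach_within :: "('s, 'a, 'x) wpmdp \<Rightarrow> ('s \<Rightarrow> 'a) \<Rightarrow> ('x \<Rightarrow> real) \<Rightarrow> 's \<Rightarrow> nat \<Rightarrow> 's \<Rightarrow> real" where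
  "reach_within M \<sigma> val t 0 s = (if s = t then 1 else 0)"
| "reach_within M \<sigma> val t (Suc k) s =
     (if s = t then 1 else if s \<in> targets M then 0
      else (\<Sum>s'\<in>states M. peval (trans M s (\<sigma> s) s') val * reach_within M \<sigma> val t k s'))"

text \<open>Probability of eventually reaching t (measure of the union of the cylinder sets
of finite paths reaching t), i.e. the supremum of the bounded reachability probabilities.\<close>
definition reach_prob :: "('s, 'a, 'x) wpmdp \<Rightarrow> ('s \<Rightarrow> 'a) \<Rightarrow> ('x \<Rightarrow> real) \<Rightarrow> 's \<Rightarrow> 's \<Rightarrow> real" where
  "reach_prob M \<sigma> val s t = (SUP k. reach_within M \<sigma> val t k s)"

datatype ('s, 'a) vertex = SV 's | SAV 's 'a

definition vertices :: "('s, 'a, 'x) wpmdp \<Rightarrow> ('s, 'a) vertex set" where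
  "vertices M = SV ` states M \<union> {SAV s a | s a. s \<in> states M - targets M \<and> a \<in> actions M}"

definition rew_state :: "('s, 'a, 'x) wpmdp \<Rightarrow> ('s \<Rightarrow> 'a) \<Rightarrow> ('x \<Rightarrow> real) \<Rightarrow> 's \<Rightarrow> real" where
  "rew_state M \<sigma> val s = (\<Sum>t\<in>targets M. of_rat (weight M t) * reach_prob M \<sigma> val s t)"

fun rew :: "('s, 'a, 'x) wpmdp \<Rightarrow> ('s \<Rightarrow> 'a) \<Rightarrow> ('x \<Rightarrow> real) \<Rightarrow> ('s, 'a) vertex \<Rightarrow> real" where
  "rew M \<sigma> val (SV s) = rew_state M \<sigma> val s"
| "rew M \<sigma> val (SAV s a) =
     (\<Sum>s'\<in>{s'\<in>states M. trans M s a s' \<noteq> 0}. peval (trans M s a s') val * rew_state M \<sigma> val s')"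

definition rew_opt :: "('s, 'a, 'x) wpmdp \<Rightarrow> ('x \<Rightarrow> real) \<Rightarrow> ('s, 'a) vertex \<Rightarrow> real" where
  "rew_opt M val v = (SUP \<sigma>\<in>strategies M. rew M \<sigma> val v)"

definition never_worse :: "('s, 'a, 'x) wpmdp \<Rightarrow> ('s, 'a) vertex \<Rightarrow> ('s, 'a) vertex set \<Rightarrow> bool" where
  "never_worse M v W \<longleftrightarrow>
     (\<forall>val. graph_preserving M val \<longrightarrow> (\<exists>w\<in>W. rew_opt M val v \<le> rew_opt M val w))"

text \<open>States of N: Inl s for old states, Inr True = fin, Inr False = fail.
Actions of N: Some a for old actions, None = the fresh action.
The parameter tn is the target of maximal weight.\<close>

definition N_trans :: "('s, 'a, 'x) wpmdp \<Rightarrow> 's \<Rightarrow> 's + bool \<Rightarrow> 'a option \<Rightarrow> 's + bool \<Rightarrow> 'x mpoly" where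
  "N_trans M tn s a s' =
     (case (s, a, s') of
        (Inl x, Some b, Inl y) \<Rightarrow> trans M x b y
      | (Inl t, None, Inr True) \<Rightarrow>
          (if t \<in> targets M then pconst (weight M t / weight M tn) else 0)
      | (Inl t, None, Inr False) \<Rightarrow>
          (if t \<in> targets M then pconst (1 - weight M t / weight M tn) else 0)
      | _ \<Rightarrow> 0)"

definition to_pMDP :: "('s, 'a, 'x) wpmdp \<Rightarrow> 's \<Rightarrow> ('s + bool, 'a option, 'x) wpmdp" where
  "to_pMDP M tn =
     \<lparr> states = Inl ` states M \<union> {Inr True, Inr False},
       actions = Some ` actions M \<union> {None},
       trans = N_trans M tn,
       targets = {Inr True, Inr False},
       weight = (\<lambda>s. if s = Inr True then 1 else 0) \<rparr>"

fun embV :: "('s, 'a) vertex \<Rightarrow> ('s + bool, 'a option) vertex" where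
  "embV (SV s) = SV (Inl s)"
| "embV (SAV s a) = SAV (Inl s) (Some a)"

end

theory Submission
  imports Defs
begin

(*
  For a graph-preserving valuation both models are graph-preserving at once, because the fresh
  transitions of N are constants in [0,1] summing to 1. In N the fresh action is the only one
  available at an old target and unavailable elsewhere, so strategies of M and N correspond.
  Under corresponding strategies, fin is reached from an old state s with probability
  sum_t rho(t)/rho(t_n) * P^s[<> t] = Rew(s)/rho(t_n). Hence every optimal value in N is the
  one in M divided by the positive constant rho(t_n), and all never-worse comparisons agree.
*)

lemma peval_0 [simp]: "peval 0 val = 0"
  by (simp add: peval_def)

lemma peval_pconst [simp]: "peval (pconst c) val = of_rat c"
  by (simp add: peval_def pconst_def)

lemma pconst_eq_0_iff [simp]: "pconst c = 0 \<longleftrightarrow> c = 0"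
  by (metis lookup_single_eq lookup_zero pconst_def single_zero)

definition graph_preserving_at :: "('s, 'a, 'x) wpmdp \<Rightarrow> ('x \<Rightarrow> real) \<Rightarrow> 's \<Rightarrow> 'a \<Rightarrow> bool" where
  "graph_preserving_at M val s a \<longleftrightarrow>
     (\<forall>s'\<in>states M. peval (trans M s a s') val \<ge> 0 \<and>
        (trans M s a s' \<noteq> 0 \<longrightarrow> peval (trans M s a s') val \<noteq> 0)) \<and>
     (enabled M s a \<longrightarrow> (\<Sum>s'\<in>states M. peval (trans M s a s') val) = 1)"

lemma graph_preserving_iff_at:
  "graph_preserving M val \<longleftrightarrow>
     (\<forall>s\<in>states M - targets M. \<forall>a\<in>actions M. graph_preserving_at M val s a)"
  by (simp add: graph_preserving_def graph_preserving_at_def)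

lemma wf_wpmdp_trans_eq_0:
  assumes "wf_wpmdp M" and "s \<notin> states M - targets M"
  shows "trans M s a s' = 0"
  using assms by (auto simp: wf_wpmdp_def)

lemma graph_preserving_at_target:
  assumes "wf_wpmdp M" and "s \<in> targets M"
  shows "graph_preserving_at M val s a"
  using wf_wpmdp_trans_eq_0[OF assms(1)] assms(2)
  by (simp add: graph_preserving_at_def enabled_def)

lemma strategies_nonempty:
  assumes "wf_wpmdp M"
  shows "strategies M \<noteq> {}"
proof -
  have "\<forall>s\<in>states M - targets M. \<exists>a. a \<in> actions M \<and> enabled M s a"
    using assms by (auto simp: wf_wpmdp_def)
  then obtain \<sigma> where "\<forall>s\<in>states M - targets M. \<sigma> s \<in> actions M \<and> enabled M s (\<sigma> s)"
    by (metis bchoice)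
  then show ?thesis
    by (auto simp: strategies_def)
qed

lemma reach_within_target:
  "s \<in> targets M \<Longrightarrow> reach_within M \<sigma> val u k s = (if s = u then 1 else 0)"
  by (cases k) auto

context
  fixes M :: "('s, 'a, 'x) wpmdp" and val :: "'x \<Rightarrow> real" and \<sigma> :: "'s \<Rightarrow> 'a"
  assumes gp: "graph_preserving M val" and strat: "\<sigma> \<in> strategies M"
begin

lemma strategy_step_nonneg:
  "s \<in> states M - targets M \<Longrightarrow> s' \<in> states M \<Longrightarrow> 0 \<le> peval (trans M s (\<sigma> s) s') val"
  using gp strat by (simp add: graph_preserving_def strategies_def)

lemma strategy_step_sum:
  "s \<in> states M - targets M \<Longrightarrow> (\<Sum>s'\<in>states M. peval (trans M s (\<sigma> s) s') val) = 1"
  using gp strat by (simp add: graph_preserving_def strategies_def)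

lemma reach_within_bounds:
  "s \<in> states M \<Longrightarrow> 0 \<le> reach_within M \<sigma> val u k s \<and> reach_within M \<sigma> val u k s \<le> 1"
proof (induction k arbitrary: s)
  case (Suc k)
  show ?case
  proof (cases "s = u \<or> s \<in> targets M")
    case False
    let ?p = "\<lambda>s'. peval (trans M s (\<sigma> s) s') val"
    have s: "s \<in> states M - targets M"
      using False Suc.prems by blast
    have "(\<Sum>s'\<in>states M. ?p s' * reach_within M \<sigma> val u k s') \<le> (\<Sum>s'\<in>states M. ?p s')"
      using Suc.IH strategy_step_nonneg[OF s] by (intro sum_mono mult_left_le) auto
    moreover have "0 \<le> (\<Sum>s'\<in>states M. ?p s' * reach_within M \<sigma> val u k s')"
      using Suc.IH strategy_step_nonneg[OF s] by (intro sum_nonneg) auto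
    ultimately show ?thesis
      using False strategy_step_sum[OF s] by simp
  qed auto
qed simp

lemma reach_within_le_Suc:
  "s \<in> states M \<Longrightarrow> reach_within M \<sigma> val u k s \<le> reach_within M \<sigma> val u (Suc k) s"
proof (induction k arbitrary: s)
  case 0
  then show ?case
    using reach_within_bounds[of s u "Suc 0"] by (cases "s = u") auto
next
  case (Suc k)
  show ?case
  proof (cases "s = u \<or> s \<in> targets M")
    case False
    then have "s \<in> states M - targets M"
      using Suc.prems by blast
    then show ?thesis
      using False Suc.IH strategy_step_nonneg by (auto intro!: sum_mono mult_left_mono)
  qed auto
qed

lemma reach_within_tendsto_reach_prob:
  assumes "s \<in> states M"
  shows "(\<lambda>k. reach_within M \<sigma> val u k s) \<longlonglongrightarrow> reach_prob M \<sigma> val s u"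
  unfolding reach_prob_def
proof (rule LIMSEQ_incseq_SUP)
  show "bdd_above (range (\<lambda>k. reach_within M \<sigma> val u k s))"
    using reach_within_bounds[OF assms] by (intro bdd_aboveI[of _ 1]) auto
  show "incseq (\<lambda>k. reach_within M \<sigma> val u k s)"
    using reach_within_le_Suc[OF assms] by (rule incseq_SucI)
qed

lemma reach_prob_bounds:
  assumes "s \<in> states M"
  shows "0 \<le> reach_prob M \<sigma> val s u \<and> reach_prob M \<sigma> val s u \<le> 1"
proof -
  note lim = reach_within_tendsto_reach_prob[OF assms, of u]
  show ?thesis
    using reach_within_bounds[OF assms]
    by (intro conjI LIMSEQ_le_const[OF lim] LIMSEQ_le_const2[OF lim]) auto
qed

lemma abs_rew_state_le:
  assumes "s \<in> states M"
  shows "\<bar>rew_state M \<sigma> val s\<bar> \<le> (\<Sum>t\<in>targets M. \<bar>of_rat (weight M t)\<bar>)"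
  unfolding rew_state_def
proof (rule order_trans[OF sum_abs sum_mono])
  fix t
  show "\<bar>of_rat (weight M t) * reach_prob M \<sigma> val s t\<bar> \<le> \<bar>of_rat (weight M t)\<bar>"
    using reach_prob_bounds[OF assms, of t] by (simp add: abs_mult mult_left_le)
qed

lemma rew_le_sum_abs_weight:
  assumes "finite (states M)" and "v \<in> vertices M"
  shows "rew M \<sigma> val v \<le> (\<Sum>t\<in>targets M. \<bar>of_rat (weight M t)\<bar>)"
proof (cases v)
  case (SV s)
  then show ?thesis
    using assms(2) abs_rew_state_le by (force simp: vertices_def)
next
  case (SAV s a)
  then have s: "s \<in> states M - targets M" and a: "a \<in> actions M"
    using assms(2) by (auto simp: vertices_def)
  let ?B = "\<Sum>t\<in>targets M. \<bar>of_rat (weight M t)\<bar> :: real"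
  let ?S = "{s'\<in>states M. trans M s a s' \<noteq> 0}"
  let ?p = "\<lambda>s'. peval (trans M s a s') val"
  have p_nonneg: "s' \<in> states M \<Longrightarrow> 0 \<le> ?p s'" for s'
    using gp s a by (auto simp: graph_preserving_def)
  have p_sum: "(\<Sum>s'\<in>?S. ?p s') \<le> 1"
  proof (cases "enabled M s a")
    case True
    then have "(\<Sum>s'\<in>states M. ?p s') = 1"
      using gp s a by (auto simp: graph_preserving_def)
    moreover have "(\<Sum>s'\<in>?S. ?p s') \<le> (\<Sum>s'\<in>states M. ?p s')"
      using p_nonneg assms(1) by (intro sum_mono2) auto
    ultimately show ?thesis
      by simp
  next
    case False
    then show ?thesis
      by (simp add: enabled_def)
  qed
  have "rew M \<sigma> val v = (\<Sum>s'\<in>?S. ?p s' * rew_state M \<sigma> val s')"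
    using SAV by simp
  also have "\<dots> \<le> (\<Sum>s'\<in>?S. ?p s' * ?B)"
    using p_nonneg abs_rew_state_le by (intro sum_mono mult_left_mono) (auto simp: abs_le_iff)
  also have "\<dots> = (\<Sum>s'\<in>?S. ?p s') * ?B"
    by (simp add: sum_distrib_right)
  also have "\<dots> \<le> ?B"
    using p_sum p_nonneg by (intro mult_left_le_one_le sum_nonneg) auto
  finally show ?thesis .
qed

end

lemma to_pMDP_simps [simp]:
  "states (to_pMDP M tn) = insert (Inr True) (insert (Inr False) (Inl ` states M))"
  "actions (to_pMDP M tn) = insert None (Some ` actions M)"
  "trans (to_pMDP M tn) = N_trans M tn"
  "targets (to_pMDP M tn) = {Inr True, Inr False}"
  "weight (to_pMDP M tn) = (\<lambda>s. if s = Inr True then 1 else 0)"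
  by (auto simp: to_pMDP_def)

lemma N_trans_simps [simp]:
  "N_trans M tn (Inl s) (Some a) (Inl s') = trans M s a s'"
  "N_trans M tn (Inl s) (Some a) (Inr b) = 0"
  "N_trans M tn (Inl s) None (Inl s') = 0"
  "N_trans M tn (Inl s) None (Inr True) =
     (if s \<in> targets M then pconst (weight M s / weight M tn) else 0)"
  "N_trans M tn (Inl s) None (Inr False) =
     (if s \<in> targets M then pconst (1 - weight M s / weight M tn) else 0)"
  "N_trans M tn (Inr b) c z = 0"
  by (auto simp: N_trans_def split: option.splits sum.splits bool.splits)

lemma sum_insert_Inr_Inl:
  assumes "finite S"
  shows "(\<Sum>x\<in>insert (Inr True) (insert (Inr False) (Inl ` S)). f x) =
           (\<Sum>s\<in>S. f (Inl s)) + f (Inr True) + f (Inr False)"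
  using assms by (simp add: sum.insert sum.reindex add_ac image_iff)

lemma enabled_to_pMDP_Some: "enabled (to_pMDP M tn) (Inl s) (Some a) \<longleftrightarrow> enabled M s a"
  by (auto simp: enabled_def)

lemma enabled_to_pMDP_None: "enabled (to_pMDP M tn) (Inl s) None \<longleftrightarrow> s \<in> targets M"
  by (cases "weight M s / weight M tn = 0") (auto simp: enabled_def)

lemma graph_preserving_at_to_pMDP_Some:
  assumes "finite (states M)"
  shows "graph_preserving_at (to_pMDP M tn) val (Inl s) (Some a) \<longleftrightarrow> graph_preserving_at M val s a"
  using assms by (simp add: graph_preserving_at_def enabled_to_pMDP_Some sum_insert_Inr_Inl)

locale pMDP_reduction =
  fixes M :: "('s, 'a, 'x) wpmdp" and tn :: 's
  assumes wf: "wf_wpmdp M"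
    and weight_tn_pos: "0 < weight M tn"
    and weight_target_bounds: "u \<in> targets M \<Longrightarrow> 0 \<le> weight M u \<and> weight M u \<le> weight M tn"
begin

abbreviation N :: "('s + bool, 'a option, 'x) wpmdp" where
  "N \<equiv> to_pMDP M tn"

lemma finite_states: "finite (states M)"
  and finite_targets: "finite (targets M)"
  using wf finite_subset by (auto simp: wf_wpmdp_def)

lemma graph_preserving_at_to_pMDP_None: "graph_preserving_at N val (Inl s) None"
proof (cases "s \<in> targets M")
  case True
  then have "0 \<le> weight M s / weight M tn" "weight M s / weight M tn \<le> 1"
    using weight_target_bounds weight_tn_pos by auto
  then show ?thesis
    using True finite_states
    by (simp add: graph_preserving_at_def enabled_to_pMDP_None sum_insert_Inr_Inl of_rat_diff)
next
  case False
  then show ?thesis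
    by (simp add: graph_preserving_at_def enabled_to_pMDP_None)
qed

lemma graph_preserving_to_pMDP_iff: "graph_preserving N val \<longleftrightarrow> graph_preserving M val"
proof -
  have "states N - targets N = Inl ` states M"
    by auto
  then have "graph_preserving N val \<longleftrightarrow>
      (\<forall>s\<in>states M. \<forall>a\<in>actions M. graph_preserving_at M val s a)"
    by (simp add: graph_preserving_iff_at graph_preserving_at_to_pMDP_None
        graph_preserving_at_to_pMDP_Some finite_states)
  also have "\<dots> \<longleftrightarrow> graph_preserving M val"
    using graph_preserving_at_target[OF wf] by (auto simp: graph_preserving_iff_at)
  finally show ?thesis .
qed

definition lift_strategy :: "('s \<Rightarrow> 'a) \<Rightarrow> 's + bool \<Rightarrow> 'a option" where
  "lift_strategy \<sigma> x =
     (case x of Inl s \<Rightarrow> if s \<in> targets M then None else Some (\<sigma> s) | Inr _ \<Rightarrow> None)"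

text \<open>At old targets \<open>lower_strategy\<close> returns the junk value \<open>the None\<close>; this is harmless,
  as strategies of M are unconstrained at targets.\<close>
definition lower_strategy :: "('s + bool \<Rightarrow> 'a option) \<Rightarrow> 's \<Rightarrow> 'a" where
  "lower_strategy \<sigma>' s = the (\<sigma>' (Inl s))"

lemma lift_strategy_in_strategies:
  "\<sigma> \<in> strategies M \<Longrightarrow> lift_strategy \<sigma> \<in> strategies N"
  by (auto simp: strategies_def lift_strategy_def enabled_to_pMDP_None enabled_to_pMDP_Some
      split: if_split_asm)

lemma strategy_to_pMDP_at:
  "\<sigma>' \<in> strategies N \<Longrightarrow> s \<in> states M \<Longrightarrow>
     \<sigma>' (Inl s) \<in> actions N \<and> enabled N (Inl s) (\<sigma>' (Inl s))"
  by (auto simp: strategies_def)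

lemma strategy_to_pMDP_target:
  assumes "\<sigma>' \<in> strategies N" and s: "s \<in> targets M"
  shows "\<sigma>' (Inl s) = None"
proof (rule ccontr)
  assume "\<sigma>' (Inl s) \<noteq> None"
  then obtain a where a: "\<sigma>' (Inl s) = Some a"
    by blast
  have "s \<in> states M"
    using wf s by (auto simp: wf_wpmdp_def)
  then have "enabled M s a"
    using strategy_to_pMDP_at[OF assms(1)] a by (metis enabled_to_pMDP_Some)
  then show False
    using wf_wpmdp_trans_eq_0[OF wf] s by (auto simp: enabled_def)
qed

lemma strategy_to_pMDP_nontarget:
  assumes "\<sigma>' \<in> strategies N" and "s \<in> states M - targets M"
  shows "\<sigma>' (Inl s) = Some (lower_strategy \<sigma>' s)"
    and "lower_strategy \<sigma>' s \<in> actions M" and "enabled M s (lower_strategy \<sigma>' s)"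
proof -
  have "\<sigma>' (Inl s) \<in> actions N" and en: "enabled N (Inl s) (\<sigma>' (Inl s))"
    using strategy_to_pMDP_at assms by auto
  moreover have "\<sigma>' (Inl s) \<noteq> None"
    using en assms(2) by (metis DiffD2 enabled_to_pMDP_None)
  ultimately obtain a where "\<sigma>' (Inl s) = Some a" "a \<in> actions M" "enabled M s a"
    by (auto simp: enabled_to_pMDP_Some)
  then show "\<sigma>' (Inl s) = Some (lower_strategy \<sigma>' s)"
    and "lower_strategy \<sigma>' s \<in> actions M" and "enabled M s (lower_strategy \<sigma>' s)"
    by (simp_all add: lower_strategy_def)
qed

lemma lower_strategy_in_strategies:
  "\<sigma>' \<in> strategies N \<Longrightarrow> lower_strategy \<sigma>' \<in> strategies M"
  using strategy_to_pMDP_nontarget(2,3) by (auto simp: strategies_def)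

context
  fixes val :: "'x \<Rightarrow> real" and \<sigma> :: "'s \<Rightarrow> 'a" and \<sigma>' :: "'s + bool \<Rightarrow> 'a option"
  assumes gp: "graph_preserving M val"
    and strat: "\<sigma> \<in> strategies M" and strat': "\<sigma>' \<in> strategies N"
    and agree: "\<And>s. s \<in> states M - targets M \<Longrightarrow> \<sigma>' (Inl s) = Some (\<sigma> s)"
begin

lemma reach_within_fin_Suc_target:
  assumes "s \<in> targets M"
  shows "reach_within N \<sigma>' val (Inr True) (Suc k) (Inl s) =
           (\<Sum>u\<in>targets M. of_rat (weight M u / weight M tn) * reach_within M \<sigma> val u k s)"
proof -
  have "reach_within N \<sigma>' val (Inr True) (Suc k) (Inl s) = of_rat (weight M s / weight M tn)"
    using assms finite_states strategy_to_pMDP_target[OF strat']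
    by (simp add: sum_insert_Inr_Inl reach_within_target)
  also have "\<dots> = (\<Sum>u\<in>targets M. of_rat (weight M u / weight M tn) * reach_within M \<sigma> val u k s)"
    using assms finite_targets
    by (simp add: reach_within_target[OF assms] if_distrib[of "\<lambda>x. _ * x"] cong: if_cong)
  finally show ?thesis .
qed

lemma reach_within_fin_Suc:
  assumes "s \<in> states M"
  shows "reach_within N \<sigma>' val (Inr True) (Suc k) (Inl s) =
           (\<Sum>u\<in>targets M. of_rat (weight M u / weight M tn) * reach_within M \<sigma> val u k s)"
  using assms
proof (induction k arbitrary: s)
  case 0
  show ?case
  proof (cases "s \<in> targets M")
    case True
    then show ?thesis
      by (rule reach_within_fin_Suc_target)
  next
    case False
    then show ?thesis
      using finite_states agree \<open>s \<in> states M\<close> by (auto simp: sum_insert_Inr_Inl intro!: sum.neutral)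
  qed
next
  case (Suc k)
  show ?case
  proof (cases "s \<in> targets M")
    case True
    then show ?thesis
      by (rule reach_within_fin_Suc_target)
  next
    case False
    let ?p = "\<lambda>s'. peval (trans M s (\<sigma> s) s') val"
    let ?c = "\<lambda>u. of_rat (weight M u / weight M tn) :: real"
    have "reach_within N \<sigma>' val (Inr True) (Suc (Suc k)) (Inl s)
        = (\<Sum>s'\<in>states M. ?p s' * reach_within N \<sigma>' val (Inr True) (Suc k) (Inl s'))"
      using False Suc.prems finite_states agree by (simp add: sum_insert_Inr_Inl)
    also have "\<dots> = (\<Sum>s'\<in>states M. ?p s' * (\<Sum>u\<in>targets M. ?c u * reach_within M \<sigma> val u k s'))"
      using Suc.IH by simp
    also have "\<dots> = (\<Sum>u\<in>targets M. ?c u * (\<Sum>s'\<in>states M. ?p s' * reach_within M \<sigma> val u k s'))"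
      by (simp add: sum_distrib_left sum.swap[of _ "states M"] algebra_simps)
    also have "\<dots> = (\<Sum>u\<in>targets M. ?c u * reach_within M \<sigma> val u (Suc k) s)"
      using False by (intro sum.cong) auto
    finally show ?thesis .
  qed
qed

lemma reach_prob_fin:
  assumes s: "s \<in> states M"
  shows "reach_prob N \<sigma>' val (Inl s) (Inr True) =
           (\<Sum>u\<in>targets M. of_rat (weight M u / weight M tn) * reach_prob M \<sigma> val s u)"
proof -
  have gp': "graph_preserving N val"
    using gp graph_preserving_to_pMDP_iff by blast
  have "(\<lambda>k. reach_within N \<sigma>' val (Inr True) (Suc k) (Inl s))
      \<longlonglongrightarrow> reach_prob N \<sigma>' val (Inl s) (Inr True)"
    using reach_within_tendsto_reach_prob[OF gp' strat'] s by (intro LIMSEQ_Suc) simp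
  moreover have "(\<lambda>k. reach_within N \<sigma>' val (Inr True) (Suc k) (Inl s))
      \<longlonglongrightarrow> (\<Sum>u\<in>targets M. of_rat (weight M u / weight M tn) * reach_prob M \<sigma> val s u)"
    unfolding reach_within_fin_Suc[OF s]
    by (intro tendsto_sum tendsto_mult_left reach_within_tendsto_reach_prob[OF gp strat s])
  ultimately show ?thesis
    by (rule LIMSEQ_unique)
qed

lemma rew_state_to_pMDP:
  assumes "s \<in> states M"
  shows "rew_state N \<sigma>' val (Inl s) = rew_state M \<sigma> val s / of_rat (weight M tn)"
  using reach_prob_fin[OF assms]
  by (simp add: rew_state_def sum_divide_distrib of_rat_divide)

lemma rew_to_pMDP:
  assumes "v \<in> vertices M"
  shows "rew N \<sigma>' val (embV v) = rew M \<sigma> val v / of_rat (weight M tn)"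
proof (cases v)
  case (SV s)
  then show ?thesis
    using assms rew_state_to_pMDP by (auto simp: vertices_def)
next
  case (SAV s a)
  let ?S = "{s'\<in>states M. trans M s a s' \<noteq> 0}"
  have "{z\<in>states N. trans N (Inl s) (Some a) z \<noteq> 0} = Inl ` ?S"
    by auto
  then have "rew N \<sigma>' val (embV v) =
      (\<Sum>s'\<in>?S. peval (trans M s a s') val * rew_state N \<sigma>' val (Inl s'))"
    using SAV by (simp add: sum.reindex)
  also have "\<dots> = (\<Sum>s'\<in>?S. peval (trans M s a s') val * rew_state M \<sigma> val s') / of_rat (weight M tn)"
    by (simp add: rew_state_to_pMDP sum_divide_distrib)
  finally show ?thesis
    using SAV by simp
qed

end

lemma rew_opt_to_pMDP:
  assumes gp: "graph_preserving M val" and v: "v \<in> vertices M"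
  shows "rew_opt N val (embV v) = rew_opt M val v / of_rat (weight M tn)"
proof -
  let ?c = "of_rat (weight M tn) :: real"
  let ?R = "(\<lambda>\<sigma>. rew M \<sigma> val v) ` strategies M"
  have lower: "rew N \<sigma>' val (embV v) = rew M (lower_strategy \<sigma>') val v / ?c"
    if "\<sigma>' \<in> strategies N" for \<sigma>'
    using rew_to_pMDP[OF gp lower_strategy_in_strategies that] strategy_to_pMDP_nontarget(1) that v
    by blast
  have lift: "rew N (lift_strategy \<sigma>) val (embV v) = rew M \<sigma> val v / ?c"
    if "\<sigma> \<in> strategies M" for \<sigma>
    using rew_to_pMDP[OF gp that lift_strategy_in_strategies[OF that]] v
    by (simp add: lift_strategy_def)
  have "(\<lambda>\<sigma>'. rew N \<sigma>' val (embV v)) ` strategies N = (\<lambda>x. x / ?c) ` ?R"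
  proof (intro equalityI subsetI)
    fix x
    assume "x \<in> (\<lambda>\<sigma>'. rew N \<sigma>' val (embV v)) ` strategies N"
    then obtain \<sigma>' where "\<sigma>' \<in> strategies N" and "x = rew N \<sigma>' val (embV v)"
      by blast
    then show "x \<in> (\<lambda>x. x / ?c) ` ?R"
      using lower lower_strategy_in_strategies by blast
  next
    fix x
    assume "x \<in> (\<lambda>x. x / ?c) ` ?R"
    then obtain \<sigma> where "\<sigma> \<in> strategies M" and "x = rew M \<sigma> val v / ?c"
      by blast
    then show "x \<in> (\<lambda>\<sigma>'. rew N \<sigma>' val (embV v)) ` strategies N"
      using lift lift_strategy_in_strategies by (metis image_eqI)
  qed
  moreover have "Sup ((\<lambda>x. x / ?c) ` ?R) = Sup ?R / ?c"
  proof (rule continuous_at_Sup_mono[symmetric])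
    show "mono (\<lambda>x. x / ?c)"
      using weight_tn_pos by (intro monoI divide_right_mono) auto
    show "continuous (at_left (Sup ?R)) (\<lambda>x. x / ?c)"
      using weight_tn_pos by (intro continuous_intros) auto
    show "?R \<noteq> {}"
      using strategies_nonempty[OF wf] by simp
    show "bdd_above ?R"
      using rew_le_sum_abs_weight[OF gp _ finite_states v] by (intro bdd_aboveI2)
  qed
  ultimately show ?thesis
    by (simp add: rew_opt_def image_image)
qed

lemma never_worse_to_pMDP_iff:
  assumes "v \<in> vertices M" and "W \<subseteq> vertices M"
  shows "never_worse N (embV v) (embV ` W) \<longleftrightarrow> never_worse M v W"
proof -
  have "rew_opt N val (embV v) \<le> rew_opt N val (embV w) \<longleftrightarrow> rew_opt M val v \<le> rew_opt M val w"
    if "graph_preserving M val" and "w \<in> W" for val w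
    using rew_opt_to_pMDP[OF that(1)] assms that(2) weight_tn_pos by (auto simp: divide_le_cancel)
  then show ?thesis
    by (auto simp: never_worse_def graph_preserving_to_pMDP_iff)
qed

end

theorem theorem1:
  fixes M :: "('s, 'a, 'x) wpmdp" and n :: nat and t :: "nat \<Rightarrow> 's"
  assumes "wf_wpmdp M"
    and "n \<ge> 1"
    and "targets M = t ` {0..n}"
    and "weight M (t 0) = 0"
    and "\<forall>i<n. weight M (t i) < weight M (t (Suc i))"
  shows "\<forall>v\<in>vertices M. \<forall>W\<subseteq>vertices M.
           never_worse M v W \<longleftrightarrow> never_worse (to_pMDP M (t n)) (embV v) (embV ` W)"
proof -
  have weight_mono: "weight M (t i) \<le> weight M (t j)" if "i \<le> j" and "j \<le> n" for i j
    by (rule lift_Suc_mono_le_ivl[where f = "\<lambda>i. weight M (t i)" and N = "{..<n}"])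
      (use assms(5) that in auto)
  have "weight M (t 0) < weight M (t n)"
    by (rule lift_Suc_mono_less_ivl[where f = "\<lambda>i. weight M (t i)" and N = "{..<n}"])
      (use assms(2,5) in auto)
  moreover have "0 \<le> weight M u \<and> weight M u \<le> weight M (t n)" if "u \<in> targets M" for u
    using that weight_mono[of 0] weight_mono[of _ n] assms(3,4) by auto
  ultimately interpret pMDP_reduction M "t n"
    using assms(1,4) by unfold_locales simp_all
  show ?thesis
    using never_worse_to_pMDP_iff by blast
qed

end
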